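(* Let $X$ be a locale. A posheaf $F$ on $X$ is complete if and only if every $F(u)$ ($u\in\mathcal{O}(X)$) is a complete lattice and every restriction map $F(u)\to F(v)$ ($v\le u$) is surjective and preserves arbitrary joins and arbitrary meets; equivalently, $F$ is a sheaf with values in the category $SCL$ of complete lattices and surjective maps preserving arbitrary sups and arbitrary infs, satisfying condition (POS3).
   Context: Let $X$ be a locale with frame of opens $\mathcal{O}(X)$. A posheaf on $X$ is a sheaf of sets $F$ with (POS1) each $F(u)$ a poset; (POS2) restriction maps $F(u)\to F(v)$, $x\mapsto x|_v$ ($v\le u$), order-preserving; (POS3) if $u=\bigvee_i u_i$ and $s,t\in F(u)$ satisfy $s|_{u_i}\le t|_{u_i}$ for all $i$, then $s\le t$. A point of $F$ is a morphism $p:\hat1\to F$ with $\hat1$ a subsheaf of the terminal sheaf, identified with an element of $F(\mathrm{dom}(p))$ where $\mathrm{dom}(p)$ is the largest open $u$ with $\hat1(u)\ne\emptyset$; points are ordered by $p_1\le p_2$ iff $\mathrm{dom}(p_1)\le\mathrm{dom}(p_2)$ and $p_1\le p_2|_{\mathrm{dom}(p_1)}$. For $u\in\mathcal{O}(X)$, $F^u$ is the restriction of $F$ to $\downarrow u$. A downsheaf is a subsheaf $G$ with each $G(v)$ a down-set of $F(v)$; $\mathbb{D}F(u)$ is the set of downsheaves of $F^u$, ordered by inclusion, with restriction to smaller opens; $\downarrow:F\to\mathbb{D}F$ sends $z\in F(u)$ to the downsheaf $v\mapsto\{y\in F(v)\mid y\le z|_v\}$ ($v\le u$). For order-preserving $\alpha,\beta$,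 $\alpha\dashv\beta$ means $\alpha x\le y\iff x\le\beta y$ for all points. $F$ is complete if $\downarrow:F\to\mathbb{D}F$ has a left adjoint. *)

theory Defs
  imports Main
begin

definition frame_law :: "'a::complete_lattice itself \<Rightarrow> bool" where
  "frame_law _ \<longleftrightarrow> (\<forall>(a::'a) S. inf a (Sup S) = Sup ((\<lambda>s. inf a s) ` S))"

text \<open>A (pre)sheaf is given by its sets of sections F u and restriction maps
  res u v (meaningful for v \<le> u).\<close>

definition presheaf :: "('a::complete_lattice \<Rightarrow> 'b set) \<Rightarrow> ('a \<Rightarrow> 'a \<Rightarrow> 'b \<Rightarrow> 'b) \<Rightarrow> bool" where
  "presheaf F res \<longleftrightarrow>
     (\<forall>u v x. v \<le> u \<and> x \<in> F u \<longrightarrow> res u v x \<in> F v) \<and>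
     (\<forall>u x. x \<in> F u \<longrightarrow> res u u x = x) \<and>
     (\<forall>u v w x. w \<le> v \<and> v \<le> u \<and> x \<in> F u \<longrightarrow> res v w (res u v x) = res u w x)"

definition sheaf :: "('a::complete_lattice \<Rightarrow> 'b set) \<Rightarrow> ('a \<Rightarrow> 'a \<Rightarrow> 'b \<Rightarrow> 'b) \<Rightarrow> bool" where
  "sheaf F res \<longleftrightarrow> presheaf F res \<and>
     (\<forall>U s. (\<forall>v\<in>U. s v \<in> F v) \<and>
            (\<forall>v\<in>U. \<forall>w\<in>U. res v (inf v w) (s v) = res w (inf v w) (s w)) \<longrightarrow>
            (\<exists>!x. x \<in> F (Sup U) \<and> (\<forall>v\<in>U. res (Sup U) v x = s v)))"

definition partial_order_on' :: "'b set \<Rightarrow> ('b \<Rightarrow> 'b \<Rightarrow> bool) \<Rightarrow> bool" where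
  "partial_order_on' A le \<longleftrightarrow>
     (\<forall>x\<in>A. le x x) \<and>
     (\<forall>x\<in>A. \<forall>y\<in>A. le x y \<and> le y x \<longrightarrow> x = y) \<and>
     (\<forall>x\<in>A. \<forall>y\<in>A. \<forall>z\<in>A. le x y \<and> le y z \<longrightarrow> le x z)"

definition posheaf :: "('a::complete_lattice \<Rightarrow> 'b set) \<Rightarrow> ('a \<Rightarrow> 'a \<Rightarrow> 'b \<Rightarrow> 'b)
    \<Rightarrow> ('a \<Rightarrow> 'b \<Rightarrow> 'b \<Rightarrow> bool) \<Rightarrow> bool" where
  "posheaf F res le \<longleftrightarrow> sheaf F res \<and>
     (\<forall>u. partial_order_on' (F u) (le u)) \<and>
     (\<forall>u v x y. v \<le> u \<and> x \<in> F u \<and> y \<in> F u \<and> le u x y \<longrightarrow> le v (res u v x) (res u v y)) \<and>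
     (\<forall>U s t. s \<in> F (Sup U) \<and> t \<in> F (Sup U) \<and>
        (\<forall>v\<in>U. le v (res (Sup U) v s) (res (Sup U) v t)) \<longrightarrow> le (Sup U) s t)"

text \<open>A point is identified with a pair (dom p, x) with x \<in> F (dom p).
  (u1,x1) \<le> (u2,x2) iff u1 \<le> u2 and x1 \<le> x2|u1.\<close>
definition pt_le :: "('a::complete_lattice \<Rightarrow> 'a \<Rightarrow> 'c \<Rightarrow> 'c) \<Rightarrow> ('a \<Rightarrow> 'c \<Rightarrow> 'c \<Rightarrow> bool)
    \<Rightarrow> 'a \<times> 'c \<Rightarrow> 'a \<times> 'c \<Rightarrow> bool" where
  "pt_le res le p q \<longleftrightarrow> fst p \<le> fst q \<and> le (fst p) (snd p) (res (fst q) (fst p) (snd q))"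

text \<open>A downsheaf of F^u, represented as a subsheaf of F (with the same restriction
  maps) supported on the opens below u (empty elsewhere), each G v a down-set of F v.\<close>
definition downsheaf :: "('a::complete_lattice \<Rightarrow> 'b set) \<Rightarrow> ('a \<Rightarrow> 'a \<Rightarrow> 'b \<Rightarrow> 'b)
    \<Rightarrow> ('a \<Rightarrow> 'b \<Rightarrow> 'b \<Rightarrow> bool) \<Rightarrow> 'a \<Rightarrow> ('a \<Rightarrow> 'b set) \<Rightarrow> bool" where
  "downsheaf F res le u G \<longleftrightarrow>
     (\<forall>v. \<not> v \<le> u \<longrightarrow> G v = {}) \<and>
     (\<forall>v. G v \<subseteq> F v) \<and>
     sheaf G res \<and>
     (\<forall>v. \<forall>x\<in>G v. \<forall>y\<in>F v. le v y x \<longrightarrow> y \<in> G v)"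

definition DF :: "('a::complete_lattice \<Rightarrow> 'b set) \<Rightarrow> ('a \<Rightarrow> 'a \<Rightarrow> 'b \<Rightarrow> 'b)
    \<Rightarrow> ('a \<Rightarrow> 'b \<Rightarrow> 'b \<Rightarrow> bool) \<Rightarrow> 'a \<Rightarrow> ('a \<Rightarrow> 'b set) set" where
  "DF F res le u = {G. downsheaf F res le u G}"

definition DRes :: "'a::complete_lattice \<Rightarrow> 'a \<Rightarrow> ('a \<Rightarrow> 'b set) \<Rightarrow> ('a \<Rightarrow> 'b set)" where
  "DRes u v G = (\<lambda>w. if w \<le> v then G w else {})"

definition DLe :: "'a \<Rightarrow> ('a \<Rightarrow> 'b set) \<Rightarrow> ('a \<Rightarrow> 'b set) \<Rightarrow> bool" where
  "DLe u G H \<longleftrightarrow> (\<forall>w. G w \<subseteq> H w)"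

definition down :: "('a::complete_lattice \<Rightarrow> 'b set) \<Rightarrow> ('a \<Rightarrow> 'a \<Rightarrow> 'b \<Rightarrow> 'b)
    \<Rightarrow> ('a \<Rightarrow> 'b \<Rightarrow> 'b \<Rightarrow> bool) \<Rightarrow> 'a \<Rightarrow> 'b \<Rightarrow> ('a \<Rightarrow> 'b set)" where
  "down F res le u z = (\<lambda>v. if v \<le> u then {y \<in> F v. le v y (res u v z)} else {})"

text \<open>F is complete iff \<open>\<down>\<close> has a left adjoint: an order-preserving sheaf morphism
  \<alpha> : \<bbbD>F \<rightarrow> F (natural transformation) with \<alpha> p \<le> q \<longleftrightarrow> p \<le> \<down> q for all
  points p of \<bbbD>F and q of F.\<close>
definition complete_posheaf :: "('a::complete_lattice \<Rightarrow> 'b set) \<Rightarrow> ('a \<Rightarrow> 'a \<Rightarrow> 'b \<Rightarrow> 'b)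
    \<Rightarrow> ('a \<Rightarrow> 'b \<Rightarrow> 'b \<Rightarrow> bool) \<Rightarrow> bool" where
  "complete_posheaf F res le \<longleftrightarrow>
    (\<exists>\<alpha> :: 'a \<Rightarrow> ('a \<Rightarrow> 'b set) \<Rightarrow> 'b.
       (\<forall>u G. G \<in> DF F res le u \<longrightarrow> \<alpha> u G \<in> F u) \<and>
       (\<forall>u v G. v \<le> u \<and> G \<in> DF F res le u \<longrightarrow> res u v (\<alpha> u G) = \<alpha> v (DRes u v G)) \<and>
       (\<forall>u G H. G \<in> DF F res le u \<and> H \<in> DF F res le u \<and> DLe u G H \<longrightarrow> le u (\<alpha> u G) (\<alpha> u H)) \<and>
       (\<forall>u G w y. G \<in> DF F res le u \<and> y \<in> F w \<longrightarrow>
          (pt_le res le (u, \<alpha> u G) (w, y) \<longleftrightarrow>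
           pt_le DRes DLe (u, G) (w, down F res le w y))))"

definition is_lub_in :: "'b set \<Rightarrow> ('b \<Rightarrow> 'b \<Rightarrow> bool) \<Rightarrow> 'b set \<Rightarrow> 'b \<Rightarrow> bool" where
  "is_lub_in A le S x \<longleftrightarrow> x \<in> A \<and> (\<forall>s\<in>S. le s x) \<and> (\<forall>y\<in>A. (\<forall>s\<in>S. le s y) \<longrightarrow> le x y)"

definition is_glb_in :: "'b set \<Rightarrow> ('b \<Rightarrow> 'b \<Rightarrow> bool) \<Rightarrow> 'b set \<Rightarrow> 'b \<Rightarrow> bool" where
  "is_glb_in A le S x \<longleftrightarrow> x \<in> A \<and> (\<forall>s\<in>S. le x s) \<and> (\<forall>y\<in>A. (\<forall>s\<in>S. le y s) \<longrightarrow> le y x)"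

definition complete_lattice_on :: "'b set \<Rightarrow> ('b \<Rightarrow> 'b \<Rightarrow> bool) \<Rightarrow> bool" where
  "complete_lattice_on A le \<longleftrightarrow> partial_order_on' A le \<and>
     (\<forall>S. S \<subseteq> A \<longrightarrow> (\<exists>x. is_lub_in A le S x)) \<and>
     (\<forall>S. S \<subseteq> A \<longrightarrow> (\<exists>x. is_glb_in A le S x))"

end

theory Submission
  imports Defs
begin

text \<open>If \<open>\<down>\<close> has a left adjoint \<open>\<Squnion>\<close>, then \<open>\<Squnion>\<close> of the downsheaf of common lower bounds of
  \<open>S \<subseteq> F(u)\<close> is the meet of \<open>S\<close>, so every \<open>F(u)\<close> is a complete lattice, and naturality of
  \<open>\<Squnion>\<close> makes restriction preserve meets. For \<open>v \<le> u\<close> and \<open>b \<in> F(v)\<close>, the largest downsheaf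
  on \<open>u\<close> restricting to \<open>\<down>b\<close> (a downsheaf thanks to the frame law) has a join restricting
  to \<open>b\<close>; this gives surjectivity of restriction and preservation of joins.
  Conversely, in the SCL-valued case let \<open>\<Squnion>G\<close> be the meet of all sections lying above \<open>G\<close>.
  Preservation of meets makes it the least such section, and naturality is obtained by
  gluing, which is where surjectivity and preservation of joins are used.\<close>

lemma is_lub_in_unique:
  "partial_order_on' A le \<Longrightarrow> is_lub_in A le S x \<Longrightarrow> is_lub_in A le S y \<Longrightarrow> x = y"
  unfolding partial_order_on'_def is_lub_in_def by blast

lemma is_glb_in_unique:
  "partial_order_on' A le \<Longrightarrow> is_glb_in A le S x \<Longrightarrow> is_glb_in A le S y \<Longrightarrow> x = y"
  unfolding partial_order_on'_def is_glb_in_def by blast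

lemma is_lub_in_if_is_glb_in_upper_bounds:
  assumes "S \<subseteq> A" and "is_glb_in A le {y \<in> A. \<forall>s\<in>S. le s y} x"
  shows "is_lub_in A le S x"
  using assms unfolding is_glb_in_def is_lub_in_def by blast

lemma frame_inf_Sup:
  assumes "frame_law TYPE('a::complete_lattice)"
  shows "inf (Sup U) (v::'a) = Sup ((\<lambda>p. inf p v) ` U)"
  using assms unfolding frame_law_def by (metis inf_commute image_cong)

lemma DF_subset: "G \<in> DF F res le u \<Longrightarrow> G w \<subseteq> F w"
  unfolding DF_def downsheaf_def by blast

lemma DF_le: "G \<in> DF F res le u \<Longrightarrow> z \<in> G w \<Longrightarrow> w \<le> u"
  unfolding DF_def downsheaf_def by blast

lemma DF_res: "G \<in> DF F res le u \<Longrightarrow> q \<le> p \<Longrightarrow> x \<in> G p \<Longrightarrow> res p q x \<in> G q"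
  unfolding DF_def downsheaf_def sheaf_def presheaf_def by blast

lemma pt_le_iff: "pt_le res le (u, x) (w, y) \<longleftrightarrow> u \<le> w \<and> le u x (res w u y)"
  by (simp add: pt_le_def)

lemma pt_le_down_iff:
  assumes "G \<in> DF F res le u"
  shows "pt_le DRes DLe (u, G) (w, down F res le w y) \<longleftrightarrow>
    u \<le> w \<and> (\<forall>p. \<forall>z\<in>G p. le p z (res w p y))"
proof (cases "u \<le> w")
  case True
  have "z \<in> DRes w u (down F res le w y) p \<longleftrightarrow> le p z (res w p y)" if "z \<in> G p" for p z
    using DF_le[OF assms that] DF_subset[OF assms] that True
    by (auto simp: DRes_def down_def dest: order_trans)
  then show ?thesis
    using True by (auto simp: pt_le_def DLe_def)
qed (simp add: pt_le_def)

locale posheaf_on =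
  fixes F :: "'a::complete_lattice \<Rightarrow> 'b set"
    and res :: "'a \<Rightarrow> 'a \<Rightarrow> 'b \<Rightarrow> 'b"
    and le :: "'a \<Rightarrow> 'b \<Rightarrow> 'b \<Rightarrow> bool"
  assumes posheaf: "posheaf F res le"
begin

lemma sheaf: "sheaf F res"
  using posheaf unfolding posheaf_def by blast

lemma res_in: "v \<le> u \<Longrightarrow> x \<in> F u \<Longrightarrow> res u v x \<in> F v"
  using sheaf unfolding sheaf_def presheaf_def by blast

lemma res_id: "x \<in> F u \<Longrightarrow> res u u x = x"
  using sheaf unfolding sheaf_def presheaf_def by blast

lemma res_res: "w \<le> v \<Longrightarrow> v \<le> u \<Longrightarrow> x \<in> F u \<Longrightarrow> res v w (res u v x) = res u w x"
  using sheaf unfolding sheaf_def presheaf_def by blast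

lemma partial_order: "partial_order_on' (F u) (le u)"
  using posheaf unfolding posheaf_def by blast

lemma le_refl: "x \<in> F u \<Longrightarrow> le u x x"
  using partial_order unfolding partial_order_on'_def by blast

lemma le_antisym: "x \<in> F u \<Longrightarrow> y \<in> F u \<Longrightarrow> le u x y \<Longrightarrow> le u y x \<Longrightarrow> x = y"
  using partial_order unfolding partial_order_on'_def by blast

lemma le_trans:
  "x \<in> F u \<Longrightarrow> y \<in> F u \<Longrightarrow> z \<in> F u \<Longrightarrow> le u x y \<Longrightarrow> le u y z \<Longrightarrow> le u x z"
  using partial_order unfolding partial_order_on'_def by blast

lemma res_mono: "v \<le> u \<Longrightarrow> x \<in> F u \<Longrightarrow> y \<in> F u \<Longrightarrow> le u x y \<Longrightarrow> le v (res u v x) (res u v y)"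
  using posheaf unfolding posheaf_def by blast

lemma le_if_le_on_cover:
  assumes "s \<in> F (Sup U)" and "t \<in> F (Sup U)"
    and "\<And>v. v \<in> U \<Longrightarrow> le v (res (Sup U) v s) (res (Sup U) v t)"
  shows "le (Sup U) s t"
  using posheaf assms unfolding posheaf_def by blast

lemma glue:
  assumes "\<And>v. v \<in> U \<Longrightarrow> s v \<in> F v"
    and "\<And>v w. v \<in> U \<Longrightarrow> w \<in> U \<Longrightarrow> res v (inf v w) (s v) = res w (inf v w) (s w)"
  shows "\<exists>!x. x \<in> F (Sup U) \<and> (\<forall>v\<in>U. res (Sup U) v x = s v)"
  by (intro sheaf[unfolded sheaf_def, THEN conjunct2, rule_format] conjI ballI assms)

lemma glue_pair:
  assumes a: "a \<in> F v" and b: "b \<in> F w"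
    and compatible: "res v (inf v w) a = res w (inf v w) b"
  shows "\<exists>x\<in>F (sup v w). res (sup v w) v x = a \<and> res (sup v w) w x = b"
proof -
  have ab: "a = b" if "v = w"
    using that compatible res_id[OF a] res_id[OF b] by simp
  define s where "s p = (if p = v then a else b)" for p
  have "\<exists>!x. x \<in> F (Sup {v, w}) \<and> (\<forall>p\<in>{v, w}. res (Sup {v, w}) p x = s p)"
    using a b compatible ab by (intro glue) (auto simp: s_def inf_commute)
  then obtain x where "x \<in> F (sup v w)" "res (sup v w) v x = s v" "res (sup v w) w x = s w"
    by auto
  moreover have "s v = a" and "s w = b"
    using ab by (auto simp: s_def)
  ultimately show ?thesis
    by metis
qed

lemma subsheafI:
  assumes sub: "\<And>v. G v \<subseteq> F v"
    and res_closed: "\<And>u v x. v \<le> u \<Longrightarrow> x \<in> G u \<Longrightarrow> res u v x \<in> G v"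
    and glue_closed: "\<And>U x. x \<in> F (Sup U) \<Longrightarrow> (\<forall>v\<in>U. res (Sup U) v x \<in> G v) \<Longrightarrow> x \<in> G (Sup U)"
  shows "sheaf G res"
  unfolding sheaf_def presheaf_def
proof (intro conjI allI impI)
  fix U s
  assume s: "(\<forall>v\<in>U. s v \<in> G v) \<and>
    (\<forall>v\<in>U. \<forall>w\<in>U. res v (inf v w) (s v) = res w (inf v w) (s w))"
  then obtain x where x: "x \<in> F (Sup U)" "\<forall>v\<in>U. res (Sup U) v x = s v"
    and unique: "\<And>y. y \<in> F (Sup U) \<Longrightarrow> \<forall>v\<in>U. res (Sup U) v y = s v \<Longrightarrow> y = x"
    using sub glue[of U s] by blast
  have "x \<in> G (Sup U)"
    using x s by (intro glue_closed) auto
  then show "\<exists>!x. x \<in> G (Sup U) \<and> (\<forall>v\<in>U. res (Sup U) v x = s v)"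
    using x unique sub by blast
next
  fix u v x
  assume "v \<le> u \<and> x \<in> G u"
  then show "res u v x \<in> G v"
    using res_closed by blast
next
  fix u x
  assume "x \<in> G u"
  then show "res u u x = x"
    using sub res_id by blast
next
  fix u v w x
  assume "w \<le> v \<and> v \<le> u \<and> x \<in> G u"
  then show "res v w (res u v x) = res u w x"
    using sub res_res by blast
qed

definition lower_sheaf :: "'a \<Rightarrow> 'b set \<Rightarrow> 'a \<Rightarrow> 'b set" where
  "lower_sheaf u S = (\<lambda>w. if w \<le> u then {z \<in> F w. \<forall>s\<in>S. le w z (res u w s)} else {})"

lemma down_eq_lower_sheaf: "down F res le u y = lower_sheaf u {y}"
  by (simp add: down_def lower_sheaf_def fun_eq_iff)

lemma lower_sheaf_DF:
  assumes S: "S \<subseteq> F u"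
  shows "lower_sheaf u S \<in> DF F res le u"
  unfolding DF_def mem_Collect_eq downsheaf_def
proof (intro conjI allI impI ballI)
  fix w x y
  assume "x \<in> lower_sheaf u S w" and "y \<in> F w" and "le w y x"
  then show "y \<in> lower_sheaf u S w"
    using S by (auto simp: lower_sheaf_def split: if_splits intro: le_trans res_in)
next
  show "sheaf (lower_sheaf u S) res"
  proof (rule subsheafI)
    fix p q x
    assume qp: "q \<le> p" and x: "x \<in> lower_sheaf u S p"
    then have pu: "p \<le> u" and xF: "x \<in> F p" and x_le: "\<forall>s\<in>S. le p x (res u p s)"
      by (auto simp: lower_sheaf_def split: if_splits)
    have "le q (res p q x) (res u q s)" if "s \<in> S" for s
      using res_mono[OF qp xF res_in[OF pu] x_le[rule_format, OF that]] res_res[OF qp pu] S that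
      by auto
    then show "res p q x \<in> lower_sheaf u S q"
      using qp pu res_in[OF qp xF] by (auto simp: lower_sheaf_def)
  next
    fix U x
    assume x: "x \<in> F (Sup U)" and xU: "\<forall>v\<in>U. res (Sup U) v x \<in> lower_sheaf u S v"
    have Uu: "Sup U \<le> u"
      using xU by (auto simp: lower_sheaf_def split: if_splits intro: Sup_least)
    have "le (Sup U) x (res u (Sup U) s)" if s: "s \<in> S" for s
    proof (rule le_if_le_on_cover[OF x res_in[OF Uu]])
      show "s \<in> F u" using S s by blast
    next
      fix v assume v: "v \<in> U"
      have vu: "v \<le> u"
        using Sup_upper[OF v] Uu by (rule order_trans)
      have "res (Sup U) v (res u (Sup U) s) = res u v s"
        using res_res[OF Sup_upper[OF v] Uu] S s by blast
      then show "le v (res (Sup U) v x) (res (Sup U) v (res u (Sup U) s))"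
        using xU v vu s by (auto simp: lower_sheaf_def)
    qed
    then show "x \<in> lower_sheaf u S (Sup U)"
      using Uu x by (auto simp: lower_sheaf_def)
  qed (auto simp: lower_sheaf_def)
qed (auto simp: lower_sheaf_def)

lemma DRes_lower_sheaf:
  assumes vu: "v \<le> u" and S: "S \<subseteq> F u"
  shows "DRes u v (lower_sheaf u S) = lower_sheaf v (res u v ` S)"
proof
  fix w
  show "DRes u v (lower_sheaf u S) w = lower_sheaf v (res u v ` S) w"
  proof (cases "w \<le> v")
    case True
    then have "res v w (res u v s) = res u w s" if "s \<in> S" for s
      using res_res[OF True vu] S that by blast
    then show ?thesis
      using True vu by (auto simp: DRes_def lower_sheaf_def)
  qed (simp add: DRes_def lower_sheaf_def)
qed

text \<open>The largest downsheaf on \<open>u\<close> whose restriction to \<open>v\<close> is \<open>\<down>b\<close>. Gluing its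
  sections needs covers of \<open>w\<close> to induce covers of \<open>w \<sqinter> v\<close>, i.e.\ the frame law.\<close>
definition down_extension :: "'a \<Rightarrow> 'a \<Rightarrow> 'b \<Rightarrow> 'a \<Rightarrow> 'b set" where
  "down_extension u v b = (\<lambda>w. if w \<le> u
     then {z \<in> F w. le (inf w v) (res w (inf w v) z) (res v (inf w v) b)} else {})"

lemma le_res_inf_if_le_on_cover:
  assumes frame: "frame_law TYPE('a)"
    and x: "x \<in> F (Sup U)" and b: "b \<in> F v"
    and le_on_U: "\<And>p. p \<in> U \<Longrightarrow> le (inf p v) (res (Sup U) (inf p v) x) (res v (inf p v) b)"
  shows "le (inf (Sup U) v) (res (Sup U) (inf (Sup U) v) x) (res v (inf (Sup U) v) b)"
proof -
  define W where "W = (\<lambda>p. inf p v) ` U"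
  have SW: "inf (Sup U) v = Sup W"
    unfolding W_def by (rule frame_inf_Sup[OF frame])
  have "le (Sup W) (res (Sup U) (Sup W) x) (res v (Sup W) b)"
  proof (rule le_if_le_on_cover)
    show "res (Sup U) (Sup W) x \<in> F (Sup W)" and "res v (Sup W) b \<in> F (Sup W)"
      using res_in[OF inf_le1 x, of v] res_in[OF inf_le2 b, of "Sup U"] SW by simp_all
  next
    fix q assume "q \<in> W"
    then obtain p where p: "p \<in> U" and q: "q = inf p v"
      unfolding W_def by blast
    have qW: "q \<le> Sup W" using \<open>q \<in> W\<close> by (rule Sup_upper)
    have WU: "Sup W \<le> Sup U" and Wv: "Sup W \<le> v"
      using SW[symmetric] by simp_all
    show "le q (res (Sup W) q (res (Sup U) (Sup W) x)) (res (Sup W) q (res v (Sup W) b))"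
      using le_on_U[OF p] res_res[OF qW WU x] res_res[OF qW Wv b] q by simp
  qed
  then show ?thesis
    using SW by simp
qed

lemma down_extension_DF:
  assumes frame: "frame_law TYPE('a)" and b: "b \<in> F v"
  shows "down_extension u v b \<in> DF F res le u"
  unfolding DF_def mem_Collect_eq downsheaf_def
proof (intro conjI allI impI ballI)
  fix w x y
  assume "x \<in> down_extension u v b w" and y: "y \<in> F w" and "le w y x"
  then show "y \<in> down_extension u v b w"
    using res_mono[OF inf_le1 y, of _ v] res_in[OF inf_le1, of _ w v] res_in[OF inf_le2 b, of w]
    by (auto simp: down_extension_def split: if_splits intro: le_trans)
next
  show "sheaf (down_extension u v b) res"
  proof (rule subsheafI)
    fix p q x
    assume qp: "q \<le> p" and "x \<in> down_extension u v b p"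
    then have pu: "p \<le> u" and xF: "x \<in> F p"
      and x_le: "le (inf p v) (res p (inf p v) x) (res v (inf p v) b)"
      by (auto simp: down_extension_def split: if_splits)
    have qv: "inf q v \<le> inf p v"
      using qp by (rule inf_mono) simp
    have "le (inf q v) (res q (inf q v) (res p q x)) (res v (inf q v) b)"
      using res_mono[OF qv res_in[OF inf_le1 xF] res_in[OF inf_le2 b] x_le]
        res_res[OF qv inf_le1 xF] res_res[OF inf_le1 qp xF] res_res[OF qv inf_le2 b]
      by simp
    then show "res p q x \<in> down_extension u v b q"
      using qp pu res_in[OF qp xF] by (auto simp: down_extension_def)
  next
    fix U x
    assume x: "x \<in> F (Sup U)" and xU: "\<forall>p\<in>U. res (Sup U) p x \<in> down_extension u v b p"
    have Uu: "Sup U \<le> u"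
      using xU by (auto simp: down_extension_def split: if_splits intro: Sup_least)
    have "le (inf p v) (res (Sup U) (inf p v) x) (res v (inf p v) b)" if p: "p \<in> U" for p
      using xU p res_res[OF inf_le1 Sup_upper[OF p] x, of v]
      by (auto simp: down_extension_def split: if_splits)
    then show "x \<in> down_extension u v b (Sup U)"
      using le_res_inf_if_le_on_cover[OF frame x b] Uu x by (simp add: down_extension_def)
  qed (auto simp: down_extension_def)
qed (auto simp: down_extension_def)

lemma DRes_down_extension:
  assumes "v \<le> u"
  shows "DRes u v (down_extension u v b) = down F res le v b"
  using assms res_id by (auto simp: DRes_def down_extension_def down_def fun_eq_iff inf_absorb1)

end

locale scl_posheaf = posheaf_on +
  assumes complete_lattice_on: "complete_lattice_on (F u) (le u)"
    and res_surj: "\<And>u v. v \<le> u \<Longrightarrow> res u v ` F u = F v"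
    and res_is_lub: "\<And>u v S x. v \<le> u \<Longrightarrow> S \<subseteq> F u \<Longrightarrow> is_lub_in (F u) (le u) S x \<Longrightarrow>
      is_lub_in (F v) (le v) (res u v ` S) (res u v x)"
    and res_is_glb: "\<And>u v S x. v \<le> u \<Longrightarrow> S \<subseteq> F u \<Longrightarrow> is_glb_in (F u) (le u) S x \<Longrightarrow>
      is_glb_in (F v) (le v) (res u v ` S) (res u v x)"
begin

lemma lub_exists: "S \<subseteq> F u \<Longrightarrow> \<exists>x. is_lub_in (F u) (le u) S x"
  using complete_lattice_on unfolding complete_lattice_on_def by blast

lemma glb_exists: "S \<subseteq> F u \<Longrightarrow> \<exists>x. is_glb_in (F u) (le u) S x"
  using complete_lattice_on unfolding complete_lattice_on_def by blast

text \<open>Glue \<open>y\<close> on \<open>v\<close> with the join of \<open>z\<close> and an extension of \<open>y|(v \<sqinter> w)\<close> on \<open>w\<close>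
  (the two agree on \<open>v \<sqinter> w\<close> because restriction preserves joins), then extend to \<open>u\<close>.\<close>
lemma extend_section_above:
  assumes vu: "v \<le> u" and wu: "w \<le> u" and y: "y \<in> F v" and z: "z \<in> F w"
    and z_le: "le (inf v w) (res w (inf v w) z) (res v (inf v w) y)"
  shows "\<exists>x\<in>F u. res u v x = y \<and> le w z (res u w x)"
proof -
  define m where "m = inf v w"
  have mv: "m \<le> v" and mw: "m \<le> w"
    unfolding m_def by simp_all
  have ym: "res v m y \<in> F m"
    using res_in[OF mv y] .
  obtain a' where a': "a' \<in> F w" "res w m a' = res v m y"
    using res_surj[OF mw] ym by (metis imageE)
  obtain a where a: "is_lub_in (F w) (le w) {a', z} a"
    using lub_exists[of "{a', z}" w] a' z by blast
  then have aF: "a \<in> F w" and za: "le w z a"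
    unfolding is_lub_in_def by simp_all
  have "is_lub_in (F m) (le m) (res w m ` {a', z}) (res w m a)"
    using res_is_lub[OF mw _ a] a' z by blast
  moreover have "is_lub_in (F m) (le m) (res w m ` {a', z}) (res v m y)"
    using a'(2) ym le_refl[OF ym] z_le unfolding is_lub_in_def m_def by auto
  ultimately have "res w m a = res v m y"
    by (rule is_lub_in_unique[OF partial_order])
  then obtain x' where x': "x' \<in> F (sup v w)" "res (sup v w) v x' = y" "res (sup v w) w x' = a"
    using glue_pair[OF y aF] unfolding m_def by metis
  have vwu: "sup v w \<le> u"
    using vu wu by simp
  obtain x where x: "x \<in> F u" "res u (sup v w) x = x'"
    using res_surj[OF vwu] x'(1) by (metis imageE)
  have "res u v x = y" and "res u w x = a"
    using res_res[OF sup_ge1 vwu x(1)] res_res[OF sup_ge2 vwu x(1)] x(2) x' by simp_all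
  then show ?thesis
    using x(1) za by blast
qed

lemma greatest_res_below:
  assumes vu: "v \<le> u" and d: "d \<in> F v"
  shows "\<exists>l\<in>F u. le v (res u v l) d \<and> (\<forall>y\<in>F u. le v (res u v y) d \<longrightarrow> le u y l)"
proof -
  define P where "P = {y \<in> F u. le v (res u v y) d}"
  obtain l where l: "is_lub_in (F u) (le u) P l"
    using lub_exists[of P u] unfolding P_def by blast
  have "is_lub_in (F v) (le v) (res u v ` P) (res u v l)"
    using res_is_lub[OF vu _ l] unfolding P_def by blast
  then have "le v (res u v l) d"
    using d unfolding is_lub_in_def P_def by blast
  then show ?thesis
    using l unfolding is_lub_in_def P_def by blast
qed

definition upper_sections :: "'a \<Rightarrow> ('a \<Rightarrow> 'b set) \<Rightarrow> 'b set" where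
  "upper_sections u G = {y \<in> F u. \<forall>w\<le>u. \<forall>z\<in>G w. le w z (res u w y)}"

definition join :: "'a \<Rightarrow> ('a \<Rightarrow> 'b set) \<Rightarrow> 'b" where
  "join u G = (SOME c. is_glb_in (F u) (le u) (upper_sections u G) c)"

lemma is_glb_join: "is_glb_in (F u) (le u) (upper_sections u G) (join u G)"
  unfolding join_def by (rule someI_ex, rule glb_exists) (auto simp: upper_sections_def)

lemma join_in: "join u G \<in> F u"
  using is_glb_join unfolding is_glb_in_def by blast

text \<open>Here preservation of meets by restriction is what makes the meet an upper section.\<close>
lemma join_upper_section:
  assumes G: "\<And>w. G w \<subseteq> F w"
  shows "join u G \<in> upper_sections u G"
proof -
  have "le w z (res u w (join u G))" if wu: "w \<le> u" and z: "z \<in> G w" for w z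
  proof -
    have "is_glb_in (F w) (le w) (res u w ` upper_sections u G) (res u w (join u G))"
      using res_is_glb[OF wu _ is_glb_join] by (auto simp: upper_sections_def)
    moreover have "\<forall>t\<in>res u w ` upper_sections u G. le w z t"
      using wu z by (auto simp: upper_sections_def)
    ultimately show ?thesis
      using G z unfolding is_glb_in_def by blast
  qed
  then show ?thesis
    using join_in by (simp add: upper_sections_def)
qed

lemma join_le_iff:
  assumes G: "\<And>w. G w \<subseteq> F w" and y: "y \<in> F u"
  shows "le u (join u G) y \<longleftrightarrow> y \<in> upper_sections u G"
proof
  assume "y \<in> upper_sections u G"
  then show "le u (join u G) y"
    using is_glb_join unfolding is_glb_in_def by blast
next
  assume join_le: "le u (join u G) y"
  have "le w z (res u w y)" if wu: "w \<le> u" and z: "z \<in> G w" for w z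
  proof -
    have "le w z (res u w (join u G))"
      using join_upper_section[OF G] wu z by (simp add: upper_sections_def)
    then show ?thesis
      using le_trans[OF _ res_in[OF wu join_in] res_in[OF wu y] _ res_mono[OF wu join_in y join_le]]
        G z by blast
  qed
  then show "y \<in> upper_sections u G"
    using y by (simp add: upper_sections_def)
qed

lemma join_mono:
  assumes "\<And>w. G w \<subseteq> H w"
  shows "le u (join u G) (join u H)"
proof -
  have "upper_sections u H \<subseteq> upper_sections u G"
    using assms by (auto simp: upper_sections_def)
  then show ?thesis
    using is_glb_join[of u G] is_glb_join[of u H] join_in unfolding is_glb_in_def by blast
qed

text \<open>The nontrivial inequality: the greatest \<open>l\<close> with \<open>l|v \<le> \<Squnion>(G|v)\<close> lies above \<open>G\<close>,
  by \<open>extend_section_above\<close>.\<close>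
lemma res_join:
  assumes vu: "v \<le> u" and G: "G \<in> DF F res le u"
  shows "res u v (join u G) = join v (DRes u v G)"
proof -
  define D where "D = DRes u v G"
  have G_sub: "\<And>w. G w \<subseteq> F w" and D_sub: "\<And>w. D w \<subseteq> F w"
    using DF_subset[OF G] by (auto simp: D_def DRes_def)
  have c: "res u v (join u G) \<in> F v"
    using res_in[OF vu join_in] .
  have "res u v (join u G) \<in> upper_sections v D"
    using join_upper_section[OF G_sub] res_res[OF _ vu join_in] c vu
    by (auto simp: upper_sections_def D_def DRes_def)
  then have join_le_res: "le v (join v D) (res u v (join u G))"
    using join_le_iff[OF D_sub c] by blast
  obtain l where l: "l \<in> F u" "le v (res u v l) (join v D)"
    and l_greatest: "\<And>y. y \<in> F u \<Longrightarrow> le v (res u v y) (join v D) \<Longrightarrow> le u y l"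
    using greatest_res_below[OF vu join_in] by blast
  have "le w z (res u w l)" if wu: "w \<le> u" and z: "z \<in> G w" for w z
  proof -
    have "res w (inf v w) z \<in> D (inf v w)"
      using DF_res[OF G inf_le2 z] by (simp add: D_def DRes_def)
    then have "le (inf v w) (res w (inf v w) z) (res v (inf v w) (join v D))"
      using join_upper_section[OF D_sub] by (simp add: upper_sections_def)
    then obtain x where x: "x \<in> F u" "res u v x = join v D" "le w z (res u w x)"
      using extend_section_above[OF vu wu join_in] G_sub z by blast
    then have "le u x l"
      using l_greatest le_refl[OF join_in] by simp
    then show ?thesis
      using le_trans[OF _ res_in[OF wu x(1)] res_in[OF wu l(1)] x(3) res_mono[OF wu x(1) l(1)]]
        G_sub z by blast
  qed
  then have "le u (join u G) l"
    using join_le_iff[OF G_sub l(1)] l(1) by (simp add: upper_sections_def)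
  then have "le v (res u v (join u G)) (join v D)"
    using le_trans[OF c res_in[OF vu l(1)] join_in res_mono[OF vu join_in l(1)] l(2)] by blast
  then show ?thesis
    using le_antisym[OF c join_in _ join_le_res] unfolding D_def by blast
qed

lemma join_adjoint:
  assumes G: "G \<in> DF F res le u" and y: "y \<in> F w"
  shows "pt_le res le (u, join u G) (w, y) \<longleftrightarrow> pt_le DRes DLe (u, G) (w, down F res le w y)"
proof (cases "u \<le> w")
  case True
  have "le u (join u G) (res w u y) \<longleftrightarrow> res w u y \<in> upper_sections u G"
    using join_le_iff[OF DF_subset[OF G] res_in[OF True y]] .
  also have "\<dots> \<longleftrightarrow> (\<forall>p. \<forall>z\<in>G p. le p z (res w p y))"
    using res_in[OF True y] res_res[OF _ True y] DF_le[OF G] by (auto simp: upper_sections_def)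
  finally have "pt_le res le (u, join u G) (w, y) \<longleftrightarrow> (\<forall>p. \<forall>z\<in>G p. le p z (res w p y))"
    using True by (simp add: pt_le_iff)
  then show ?thesis
    using pt_le_down_iff[OF G, of w y] True by simp
qed (simp add: pt_le_def)

lemma complete_posheaf: "complete_posheaf F res le"
  unfolding complete_posheaf_def
  using join_in res_join join_mono join_adjoint by (intro exI[of _ join]) (auto simp: DLe_def)

end

locale posheaf_left_adjoint = posheaf_on +
  fixes join :: "'a \<Rightarrow> ('a \<Rightarrow> 'b set) \<Rightarrow> 'b"
  assumes join_in: "G \<in> DF F res le u \<Longrightarrow> join u G \<in> F u"
    and res_join: "v \<le> u \<Longrightarrow> G \<in> DF F res le u \<Longrightarrow> res u v (join u G) = join v (DRes u v G)"
    and join_adjoint: "G \<in> DF F res le u \<Longrightarrow> y \<in> F w \<Longrightarrow>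
      pt_le res le (u, join u G) (w, y) \<longleftrightarrow> pt_le DRes DLe (u, G) (w, down F res le w y)"
begin

lemma join_le_iff:
  assumes G: "G \<in> DF F res le u" and y: "y \<in> F u"
  shows "le u (join u G) y \<longleftrightarrow> (\<forall>w. \<forall>z\<in>G w. le w z (res u w y))"
proof -
  have "pt_le res le (u, join u G) (u, y) \<longleftrightarrow> le u (join u G) y"
    using res_id[OF y] by (simp add: pt_le_iff)
  then show ?thesis
    using join_adjoint[OF G y] pt_le_down_iff[OF G, of u y] by simp
qed

lemma le_res_join:
  assumes G: "G \<in> DF F res le u" and z: "z \<in> G w"
  shows "le w z (res u w (join u G))"
  using join_le_iff[OF G join_in[OF G]] le_refl[OF join_in[OF G]] z by blast

lemma is_glb_join_lower_sheaf:
  assumes S: "S \<subseteq> F u"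
  shows "is_glb_in (F u) (le u) S (join u (lower_sheaf u S))"
  unfolding is_glb_in_def
proof (intro conjI ballI impI)
  have G: "lower_sheaf u S \<in> DF F res le u"
    using S by (rule lower_sheaf_DF)
  show "join u (lower_sheaf u S) \<in> F u"
    using G by (rule join_in)
  show "le u (join u (lower_sheaf u S)) s" if "s \<in> S" for s
    using join_le_iff[OF G] S that by (auto simp: lower_sheaf_def)
  show "le u y (join u (lower_sheaf u S))" if y: "y \<in> F u" and "\<forall>s\<in>S. le u y s" for y
  proof -
    have "y \<in> lower_sheaf u S u"
      using y that(2) S res_id by (auto simp: lower_sheaf_def)
    then show ?thesis
      using le_res_join[OF G] res_id[OF join_in[OF G]] by metis
  qed
qed

lemma join_down:
  assumes y: "y \<in> F u"
  shows "join u (down F res le u y) = y"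
proof -
  have "is_glb_in (F u) (le u) {y} (join u (down F res le u y))"
    using is_glb_join_lower_sheaf[of "{y}"] y by (simp add: down_eq_lower_sheaf)
  moreover have "is_glb_in (F u) (le u) {y} y"
    using y le_refl by (simp add: is_glb_in_def)
  ultimately show ?thesis
    by (rule is_glb_in_unique[OF partial_order])
qed

lemma res_join_down_extension:
  assumes frame: "frame_law TYPE('a)" and vu: "v \<le> u" and b: "b \<in> F v"
  shows "res u v (join u (down_extension u v b)) = b"
  using res_join[OF vu down_extension_DF[OF frame b]] DRes_down_extension[OF vu] join_down[OF b]
  by simp

lemma complete_lattice_on: "complete_lattice_on (F u) (le u)"
  unfolding complete_lattice_on_def
proof (intro conjI allI impI)
  fix S assume S: "S \<subseteq> F u"
  show "\<exists>x. is_glb_in (F u) (le u) S x"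
    using is_glb_join_lower_sheaf[OF S] by blast
  have "{y \<in> F u. \<forall>s\<in>S. le u s y} \<subseteq> F u"
    by blast
  then show "\<exists>x. is_lub_in (F u) (le u) S x"
    using is_glb_join_lower_sheaf is_lub_in_if_is_glb_in_upper_bounds[OF S] by blast
qed (rule partial_order)

lemma res_surj:
  assumes frame: "frame_law TYPE('a)" and vu: "v \<le> u"
  shows "res u v ` F u = F v"
proof
  show "F v \<subseteq> res u v ` F u"
    using res_join_down_extension[OF frame vu] join_in[OF down_extension_DF[OF frame]]
    by (metis image_eqI subsetI)
qed (use res_in[OF vu] in blast)

lemma res_is_lub:
  assumes frame: "frame_law TYPE('a)" and vu: "v \<le> u" and S: "S \<subseteq> F u"
    and x: "is_lub_in (F u) (le u) S x"
  shows "is_lub_in (F v) (le v) (res u v ` S) (res u v x)"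
  unfolding is_lub_in_def
proof (intro conjI ballI impI)
  have xF: "x \<in> F u" and x_upper: "\<forall>s\<in>S. le u s x"
    and x_least: "\<forall>y\<in>F u. (\<forall>s\<in>S. le u s y) \<longrightarrow> le u x y"
    using x unfolding is_lub_in_def by blast+
  show "res u v x \<in> F v"
    using res_in[OF vu xF] .
  show "le v t (res u v x)" if "t \<in> res u v ` S" for t
    using that res_mono[OF vu _ xF] x_upper S by blast
  show "le v (res u v x) b" if b: "b \<in> F v" and b_upper: "\<forall>t\<in>res u v ` S. le v t b" for b
  proof -
    define G where "G = down_extension u v b"
    have G: "G \<in> DF F res le u"
      unfolding G_def using frame b by (rule down_extension_DF)
    have "s \<in> G u" if "s \<in> S" for s
      using that S b_upper res_id[OF b] vu by (auto simp: G_def down_extension_def inf_absorb2)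
    then have "le u s (join u G)" if "s \<in> S" for s
      using le_res_join[OF G] res_id[OF join_in[OF G]] that by metis
    then have "le u x (join u G)"
      using x_least join_in[OF G] by blast
    then show ?thesis
      using res_mono[OF vu xF join_in[OF G]] res_join_down_extension[OF frame vu b]
      unfolding G_def by simp
  qed
qed

lemma res_is_glb:
  assumes vu: "v \<le> u" and S: "S \<subseteq> F u" and x: "is_glb_in (F u) (le u) S x"
  shows "is_glb_in (F v) (le v) (res u v ` S) (res u v x)"
proof -
  have "x = join u (lower_sheaf u S)"
    using is_glb_in_unique[OF partial_order x is_glb_join_lower_sheaf[OF S]] .
  then have "res u v x = join v (lower_sheaf v (res u v ` S))"
    using res_join[OF vu lower_sheaf_DF[OF S]] DRes_lower_sheaf[OF vu S] by simp
  moreover have "res u v ` S \<subseteq> F v"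
    using res_in[OF vu] S by blast
  ultimately show ?thesis
    using is_glb_join_lower_sheaf by simp
qed

lemma scl_posheaf:
  assumes "frame_law TYPE('a)"
  shows "scl_posheaf F res le"
  using posheaf complete_lattice_on res_surj[OF assms] res_is_lub[OF assms] res_is_glb
  by unfold_locales

end

lemma posheaf_left_adjoint_if_complete:
  assumes posheaf: "posheaf F res le" and "complete_posheaf F res le"
  obtains join where "posheaf_left_adjoint F res le join"
proof -
  obtain join where join:
      "\<forall>u G. G \<in> DF F res le u \<longrightarrow> join u G \<in> F u"
      "\<forall>u v G. v \<le> u \<and> G \<in> DF F res le u \<longrightarrow> res u v (join u G) = join v (DRes u v G)"
      "\<forall>u G w y. G \<in> DF F res le u \<and> y \<in> F w \<longrightarrow>
         (pt_le res le (u, join u G) (w, y) \<longleftrightarrow> pt_le DRes DLe (u, G) (w, down F res le w y))"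
    using assms(2) unfolding complete_posheaf_def by (elim exE conjE) (rule that; assumption)
  have "posheaf_left_adjoint F res le join"
    by unfold_locales (simp_all add: posheaf join)
  then show thesis
    by (rule that)
qed

theorem corollary3p2:
  fixes F :: "'a::complete_lattice \<Rightarrow> 'b set"
    and res :: "'a \<Rightarrow> 'a \<Rightarrow> 'b \<Rightarrow> 'b"
    and le :: "'a \<Rightarrow> 'b \<Rightarrow> 'b \<Rightarrow> bool"
  assumes "frame_law TYPE('a)"
    and "posheaf F res le"
  shows "complete_posheaf F res le \<longleftrightarrow>
    ((\<forall>u. complete_lattice_on (F u) (le u)) \<and>
     (\<forall>u v. v \<le> u \<longrightarrow> res u v ` F u = F v) \<and>
     (\<forall>u v S x. v \<le> u \<and> S \<subseteq> F u \<and> is_lub_in (F u) (le u) S x \<longrightarrow>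
                 is_lub_in (F v) (le v) (res u v ` S) (res u v x)) \<and>
     (\<forall>u v S x. v \<le> u \<and> S \<subseteq> F u \<and> is_glb_in (F u) (le u) S x \<longrightarrow>
                 is_glb_in (F v) (le v) (res u v ` S) (res u v x)))"
proof -
  have "complete_posheaf F res le \<longleftrightarrow> scl_posheaf F res le"
  proof
    assume "complete_posheaf F res le"
    then obtain join where "posheaf_left_adjoint F res le join"
      using assms(2) posheaf_left_adjoint_if_complete by blast
    then show "scl_posheaf F res le"
      using assms(1) by (rule posheaf_left_adjoint.scl_posheaf)
  qed (rule scl_posheaf.complete_posheaf)
  then show ?thesis
    using assms(2) by (simp add: scl_posheaf_def scl_posheaf_axioms_def posheaf_on_def imp_conjL)
qed

end
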